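(* Let $\mathcal T\in\mathbb R^{I_1\times\cdots\times I_N}$ and let $R\le\min_n I_n$. On tuples $(\mathbf X^{(1)},\dots,\mathbf X^{(N)})$ with $\mathbf X^{(n)}\in\mathbb R^{I_n\times R}$ of full column rank define $$\mathcal L(\mathbf X^{(1)},\dots,\mathbf X^{(N)})=\sum_{r=1}^R\sum_{i_1,\dots,i_N}t_{i_1\dots i_N}x^{(1)}_{i_1r}\cdots x^{(N)}_{i_Nr}-\tfrac12\sum_{n=1}^N\log\det\big(\mathbf X^{(n)T}\mathbf X^{(n)}\big).$$ Then the tuple is a critical point of $\mathcal L$ if and only if $\mathbf T_{(n)}\big(\bigodot_{m\ne n}\mathbf X^{(m)}\big)=\mathbf X^{(n)}(\mathbf X^{(n)T}\mathbf X^{(n)})^{-1}$ for every $n$. Moreover, at any critical point: (i) for every $i\in\{1,\dots,N\}$ and every $r\in\{1,\dots,R\}$, the vector $\mathbf w\in\mathbb R^{I_i}$ with entries $w_{a}=\sum_{i_j,\,j\ne i}t_{i_1\dots i_{i-1}\,a\,i_{i+1}\dots i_N}\prod_{j\ne i}x^{(j)}_{i_j r}$ lies in the column span of $\mathbf X^{(i)}$; (ii) the tensor $\mathcal Z$ with entries $z_{j_1\dots j_N}=\sum_{i_1,\dots,i_N}t_{i_1\dots i_N}x^{(1)}_{i_1j_1}\cdots x^{(N)}_{i_Nj_N}$ satisfies, for every $p\in\{1,\dots,N\}$ and all $r,s\in\{1,\dots,R\}$, $z_{j_1\dots j_N}=\delta_{rs}$ whenever $j_m=r$ for all $m\ne p$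 and $j_p=s$; (iii) with $\mathcal Y=[\![\mathbf X^{(1)},\dots,\mathbf X^{(N)}]\!]$, for each $i$ the $I_i\times I_i$ matrix $\mathbf T_{(i)}\mathbf Y_{(i)}^T$, with entries $\sum_{i_j,\,j\ne i}t_{\dots a\dots}\,y_{\dots b\dots}$ (index $a$, resp. $b$, in mode $i$ and all other indices summed), equals $\mathbf X^{(i)}\mathbf X^{(i)\dagger}$, the orthogonal projector onto the column space of $\mathbf X^{(i)}$.
   Context: $[\![\mathbf B^{(1)},\dots,\mathbf B^{(N)}]\!]$ denotes the tensor with entries $\sum_{r=1}^R\prod_{m}b^{(m)}_{i_m r}$. For matrices $\mathbf C^{(m)}\in\mathbb R^{I_m\times R}$ ($m\ne n$), $\mathbf T_{(n)}\big(\bigodot_{m\ne n}\mathbf C^{(m)}\big)$ denotes the $I_n\times R$ matrix with entries $\sum_{i_m,\,m\ne n}t_{i_1\dots i_N}\prod_{m\ne n}c^{(m)}_{i_m r}$. $\mathbf M^\dagger$ is the Moore–Penrose pseudoinverse; $\delta_{rs}$ is the Kronecker delta. *)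

theory Defs
  imports "Jordan_Normal_Form.Determinant"
begin

text \<open>Index tuples of an order-N tensor with mode sizes I 0, ..., I (N-1):
  functions i :: nat => nat with i n < I n for n < N, normalised to 0 beyond N.
  Factor matrices: X n a r is the (a,r) entry of X^(n) (0-based indices).\<close>

definition idx :: "nat \<Rightarrow> (nat \<Rightarrow> nat) \<Rightarrow> (nat \<Rightarrow> nat) set" where
  "idx N I = {i. (\<forall>n<N. i n < I n) \<and> (\<forall>n. N \<le> n \<longrightarrow> i n = 0)}"

definition Xmat :: "(nat \<Rightarrow> nat) \<Rightarrow> nat \<Rightarrow> (nat \<Rightarrow> nat \<Rightarrow> nat \<Rightarrow> real) \<Rightarrow> nat \<Rightarrow> real mat" where
  "Xmat I R X n = mat (I n) R (\<lambda>(a, r). X n a r)"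

definition full_col_rank :: "real mat \<Rightarrow> bool" where
  "full_col_rank A \<longleftrightarrow> (\<forall>v \<in> carrier_vec (dim_col A). A *\<^sub>v v = 0\<^sub>v (dim_row A) \<longrightarrow> v = 0\<^sub>v (dim_col A))"

definition mat_inv :: "real mat \<Rightarrow> real mat" where
  "mat_inv A = (THE B. B \<in> carrier_mat (dim_row A) (dim_row A) \<and>
      A * B = 1\<^sub>m (dim_row A) \<and> B * A = 1\<^sub>m (dim_row A))"

definition pinv :: "real mat \<Rightarrow> real mat" where
  "pinv A = (THE B. B \<in> carrier_mat (dim_col A) (dim_row A) \<and>
      A * B * A = A \<and> B * A * B = B \<and>
      transpose_mat (A * B) = A * B \<and> transpose_mat (B * A) = B * A)"

definition Lfun :: "nat \<Rightarrow> (nat \<Rightarrow> nat) \<Rightarrow> nat \<Rightarrow> ((nat \<Rightarrow> nat) \<Rightarrow> real)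
    \<Rightarrow> (nat \<Rightarrow> nat \<Rightarrow> nat \<Rightarrow> real) \<Rightarrow> real" where
  "Lfun N I R T X =
     (\<Sum>r<R. \<Sum>i\<in>idx N I. T i * (\<Prod>m<N. X m (i m) r))
     - 1/2 * (\<Sum>n<N. ln (det (transpose_mat (Xmat I R X n) * Xmat I R X n)))"

definition is_critical :: "nat \<Rightarrow> (nat \<Rightarrow> nat) \<Rightarrow> nat \<Rightarrow> ((nat \<Rightarrow> nat) \<Rightarrow> real)
    \<Rightarrow> (nat \<Rightarrow> nat \<Rightarrow> nat \<Rightarrow> real) \<Rightarrow> bool" where
  "is_critical N I R T X \<longleftrightarrow>
     (\<forall>n<N. \<forall>a<I n. \<forall>r<R.
        ((\<lambda>s. Lfun N I R T (X(n := (X n)(a := (X n a)(r := s))))) has_real_derivative 0)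
          (at (X n a r)))"

text \<open>Entry (a,r) of T_(n) (Khatri-Rao product of X^(m), m ~= n).\<close>
definition unf_prod :: "nat \<Rightarrow> (nat \<Rightarrow> nat) \<Rightarrow> ((nat \<Rightarrow> nat) \<Rightarrow> real)
    \<Rightarrow> (nat \<Rightarrow> nat \<Rightarrow> nat \<Rightarrow> real) \<Rightarrow> nat \<Rightarrow> nat \<Rightarrow> nat \<Rightarrow> real" where
  "unf_prod N I T X n a r =
     (\<Sum>i\<in>{i\<in>idx N I. i n = a}. T i * (\<Prod>m\<in>{..<N} - {n}. X m (i m) r))"

definition Zten :: "nat \<Rightarrow> (nat \<Rightarrow> nat) \<Rightarrow> ((nat \<Rightarrow> nat) \<Rightarrow> real)
    \<Rightarrow> (nat \<Rightarrow> nat \<Rightarrow> nat \<Rightarrow> real) \<Rightarrow> (nat \<Rightarrow> nat) \<Rightarrow> real" where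
  "Zten N I T X j = (\<Sum>i\<in>idx N I. T i * (\<Prod>m<N. X m (i m) (j m)))"

definition Yten :: "nat \<Rightarrow> nat \<Rightarrow> (nat \<Rightarrow> nat \<Rightarrow> nat \<Rightarrow> real) \<Rightarrow> (nat \<Rightarrow> nat) \<Rightarrow> real" where
  "Yten N R X i = (\<Sum>r<R. \<Prod>m<N. X m (i m) r)"

text \<open>Entry (a,b) of T_(n) Y_(n)^T.\<close>
definition TY :: "nat \<Rightarrow> (nat \<Rightarrow> nat) \<Rightarrow> nat \<Rightarrow> ((nat \<Rightarrow> nat) \<Rightarrow> real)
    \<Rightarrow> (nat \<Rightarrow> nat \<Rightarrow> nat \<Rightarrow> real) \<Rightarrow> nat \<Rightarrow> nat \<Rightarrow> nat \<Rightarrow> real" where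
  "TY N I R T X n a b = (\<Sum>i\<in>{i\<in>idx N I. i n = a}. T i * Yten N R X (i(n := b)))"

end

theory Submission
  imports Defs
begin

text \<open>
  The multilinear part of L is affine in each single entry x(n)_{ar}, with slope the entry (a,r) of
  T_(n) (Khatri-Rao product of the other factors). For the log-determinant part, Jacobi's formula
  d log det G = tr (G^-1 dG) applied to the Gram matrix G = X^T X (whose determinant is positive by
  full column rank) gives the slope 2 (X G^-1)_{ar}. Hence the critical points are exactly the
  solutions of T_(n) (Khatri-Rao) = X(n) G(n)^-1. At such a point the columns of the left-hand side
  lie in the range of X(n); the fibres of Z are the entries of X(n)^T T_(n) (Khatri-Rao)
  = X(n)^T X(n) G(n)^-1 = 1; and T_(i) Y_(i)^T = T_(i) (Khatri-Rao) X(i)^T = X(i) G(i)^-1 X(i)^T,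
  which is X(i) X(i)^+ for a matrix of full column rank.
\<close>

subsection \<open>Determinants and inverses\<close>

lemma cofactor_cong_rows:
  assumes "A \<in> carrier_mat k k" "B \<in> carrier_mat k k"
    and "\<And>i l. i < k \<Longrightarrow> l < k \<Longrightarrow> i \<noteq> j \<Longrightarrow> B $$ (i, l) = A $$ (i, l)"
  shows "cofactor B j l = cofactor A j l"
proof -
  have "mat_delete B j l = mat_delete A j l"
    using assms by (auto simp: mat_delete_def intro!: eq_matI)
  then show ?thesis
    by (simp add: cofactor_def)
qed

lemma det_sum_row_replaced:
  fixes A :: "'a :: comm_ring_1 mat"
  assumes A: "A \<in> carrier_mat k k" and j: "j < k"
  shows "(\<Sum>p | p permutes {0..<k}. signof p * (w (p j) * (\<Prod>i\<in>{0..<k} - {j}. A $$ (i, p i))))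
       = (\<Sum>l<k. w l * cofactor A j l)"
proof -
  define B where "B = mat k k (\<lambda>(i, l). if i = j then w l else A $$ (i, l))"
  have B: "B \<in> carrier_mat k k"
    by (simp add: B_def)
  have "(\<Prod>i\<in>{0..<k}. B $$ (i, p i)) = w (p j) * (\<Prod>i\<in>{0..<k} - {j}. A $$ (i, p i))"
    if "p permutes {0..<k}" for p
  proof -
    have "\<And>i. i < k \<Longrightarrow> p i < k"
      using that permutes_in_image[OF that] by auto
    then show ?thesis
      using j by (auto simp: prod.remove B_def intro!: prod.cong)
  qed
  then have "(\<Sum>p | p permutes {0..<k}. signof p * (w (p j) * (\<Prod>i\<in>{0..<k} - {j}. A $$ (i, p i))))
      = det B"
    using B by (simp add: det_def)
  also have "\<dots> = (\<Sum>l<k. B $$ (j, l) * cofactor B j l)"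
    using laplace_expansion_row[OF B j] .
  also have "\<dots> = (\<Sum>l<k. w l * cofactor A j l)"
  proof (intro sum.cong refl)
    fix l
    assume "l \<in> {..<k}"
    moreover have "cofactor B j l = cofactor A j l"
      by (rule cofactor_cong_rows[OF A B]) (simp add: B_def)
    ultimately show "B $$ (j, l) * cofactor B j l = w l * cofactor A j l"
      using j by (simp add: B_def)
  qed
  finally show ?thesis .
qed

lemma has_real_derivative_det:
  fixes A :: "real \<Rightarrow> real mat"
  assumes A: "\<And>t. A t \<in> carrier_mat k k"
    and D: "\<And>i j. i < k \<Longrightarrow> j < k \<Longrightarrow> ((\<lambda>t. A t $$ (i, j)) has_real_derivative D i j) (at t0)"
  shows "((\<lambda>t. det (A t)) has_real_derivative (\<Sum>i<k. \<Sum>j<k. D i j * cofactor (A t0) i j)) (at t0)"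
proof -
  let ?P = "{p. p permutes {0..<k}}"
  have "((\<lambda>t. \<Sum>p\<in>?P. signof p * (\<Prod>i\<in>{0..<k}. A t $$ (i, p i))) has_real_derivative
      (\<Sum>p\<in>?P. signof p * (\<Sum>j\<in>{0..<k}. D j (p j) * (\<Prod>i\<in>{0..<k} - {j}. A t0 $$ (i, p i))))) (at t0)"
  proof (intro DERIV_sum DERIV_cmult has_field_derivative_prod)
    fix p j
    assume "p \<in> ?P" "j \<in> {0..<k}"
    then show "((\<lambda>t. A t $$ (j, p j)) has_real_derivative D j (p j)) (at t0)"
      using D permutes_in_image[of p "{0..<k}" j] by auto
  qed
  also have "(\<Sum>p\<in>?P. signof p * (\<Sum>j\<in>{0..<k}. D j (p j) * (\<Prod>i\<in>{0..<k} - {j}. A t0 $$ (i, p i))))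
      = (\<Sum>j<k. \<Sum>p\<in>?P. signof p * (D j (p j) * (\<Prod>i\<in>{0..<k} - {j}. A t0 $$ (i, p i))))"
    unfolding sum_distrib_left atLeast0LessThan by (rule sum.swap)
  also have "\<dots> = (\<Sum>j<k. \<Sum>l<k. D j l * cofactor (A t0) j l)"
    by (intro sum.cong refl det_sum_row_replaced[OF A]) simp
  moreover have "det (A t) = (\<Sum>p\<in>?P. signof p * (\<Prod>i\<in>{0..<k}. A t $$ (i, p i)))" for t
    using A[of t] by (simp add: det_def)
  ultimately show ?thesis
    by simp
qed

lemma mat_inv_eqI:
  assumes A: "A \<in> carrier_mat k k" and B: "B \<in> carrier_mat k k"
    and AB: "A * B = 1\<^sub>m k" and BA: "B * A = 1\<^sub>m k"
  shows "mat_inv A = B"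
  unfolding mat_inv_def
proof (rule the_equality)
  show "B \<in> carrier_mat (dim_row A) (dim_row A) \<and> A * B = 1\<^sub>m (dim_row A) \<and> B * A = 1\<^sub>m (dim_row A)"
    using A B AB BA by auto
  fix C
  assume "C \<in> carrier_mat (dim_row A) (dim_row A) \<and> A * C = 1\<^sub>m (dim_row A) \<and> C * A = 1\<^sub>m (dim_row A)"
  then have C: "C \<in> carrier_mat k k" and CA: "C * A = 1\<^sub>m k"
    using A by auto
  have "C = C * (A * B)"
    using C AB by simp
  also have "\<dots> = (C * A) * B"
    using C A B by simp
  finally show "C = B"
    using CA B by simp
qed

lemma adj_mat_inverse:
  fixes A :: "'a :: field mat"
  assumes A: "A \<in> carrier_mat k k" and det: "det A \<noteq> 0"
  shows "(1 / det A) \<cdot>\<^sub>m adj_mat A \<in> carrier_mat k k"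
    "A * ((1 / det A) \<cdot>\<^sub>m adj_mat A) = 1\<^sub>m k"
    "(1 / det A) \<cdot>\<^sub>m adj_mat A * A = 1\<^sub>m k"
proof -
  have adj: "adj_mat A \<in> carrier_mat k k"
    using adj_mat(1)[OF A] .
  then show "(1 / det A) \<cdot>\<^sub>m adj_mat A \<in> carrier_mat k k"
    by simp
  show "A * ((1 / det A) \<cdot>\<^sub>m adj_mat A) = 1\<^sub>m k"
    using mult_smult_distrib[OF A adj] adj_mat(2)[OF A] det by (auto intro!: eq_matI)
  show "(1 / det A) \<cdot>\<^sub>m adj_mat A * A = 1\<^sub>m k"
    using mult_smult_assoc_mat[OF adj A] adj_mat(3)[OF A] det by (auto intro!: eq_matI)
qed

lemma mat_inv_adj_mat:
  assumes A: "A \<in> carrier_mat k k" and det: "det A \<noteq> 0"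
  shows "mat_inv A = (1 / det A) \<cdot>\<^sub>m adj_mat A"
  by (rule mat_inv_eqI[OF A adj_mat_inverse[OF A det]])

lemma mat_inv:
  assumes A: "A \<in> carrier_mat k k" and det: "det A \<noteq> 0"
  shows "mat_inv A \<in> carrier_mat k k" "A * mat_inv A = 1\<^sub>m k" "mat_inv A * A = 1\<^sub>m k"
  using adj_mat_inverse[OF A det] by (simp_all add: mat_inv_adj_mat[OF A det])

lemma cofactor_eq_det_mult_mat_inv:
  fixes A :: "real mat"
  assumes A: "A \<in> carrier_mat k k" and det: "det A \<noteq> 0" and "i < k" "j < k"
  shows "cofactor A i j = det A * mat_inv A $$ (j, i)"
  using assms by (simp add: mat_inv_adj_mat adj_mat_def)

lemma transpose_mat_inv_sym:
  fixes A :: "real mat"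
  assumes A: "A \<in> carrier_mat k k" and det: "det A \<noteq> 0" and sym: "transpose_mat A = A"
  shows "transpose_mat (mat_inv A) = mat_inv A"
proof -
  note inv = mat_inv[OF A det]
  have "mat_inv A = transpose_mat (mat_inv A)"
  proof (rule mat_inv_eqI[OF A])
    show "A * transpose_mat (mat_inv A) = 1\<^sub>m k"
      using transpose_mult[OF inv(1) A] inv(3) sym by simp
    show "transpose_mat (mat_inv A) * A = 1\<^sub>m k"
      using transpose_mult[OF A inv(1)] inv(2) sym by simp
  qed (use inv in simp)
  then show ?thesis
    by simp
qed

lemma has_real_derivative_ln_det:
  fixes A :: "real \<Rightarrow> real mat"
  assumes A: "\<And>t. A t \<in> carrier_mat k k" and pos: "det (A t0) > 0"
    and D: "\<And>i j. i < k \<Longrightarrow> j < k \<Longrightarrow> ((\<lambda>t. A t $$ (i, j)) has_real_derivative D i j) (at t0)"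
  shows "((\<lambda>t. ln (det (A t))) has_real_derivative
           (\<Sum>i<k. \<Sum>j<k. D i j * mat_inv (A t0) $$ (j, i))) (at t0)"
proof -
  have "(\<Sum>i<k. \<Sum>j<k. D i j * cofactor (A t0) i j)
      = (\<Sum>i<k. \<Sum>j<k. det (A t0) * (D i j * mat_inv (A t0) $$ (j, i)))"
    using cofactor_eq_det_mult_mat_inv[OF A] pos by (intro sum.cong refl) simp
  also have "\<dots> = det (A t0) * (\<Sum>i<k. \<Sum>j<k. D i j * mat_inv (A t0) $$ (j, i))"
    by (simp add: sum_distrib_left)
  finally have cof: "(\<Sum>i<k. \<Sum>j<k. D i j * cofactor (A t0) i j)
      = det (A t0) * (\<Sum>i<k. \<Sum>j<k. D i j * mat_inv (A t0) $$ (j, i))" .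
  show ?thesis
    using DERIV_chain2[OF DERIV_ln[OF pos] has_real_derivative_det[OF A D]] pos cof
    by (simp add: field_simps)
qed

subsection \<open>Gram matrices of full column rank\<close>

lemma smult_mat_mult_vec:
  fixes A :: "'a :: comm_semiring_0 mat"
  assumes "A \<in> carrier_mat nr nc" "v \<in> carrier_vec nc"
  shows "(c \<cdot>\<^sub>m A) *\<^sub>v v = c \<cdot>\<^sub>v (A *\<^sub>v v)"
  using assms by (intro eq_vecI) (auto dest!: carrier_vecD carrier_matD)

lemma gram_homotopy_kernel_trivial:
  fixes X :: "real mat"
  assumes X: "X \<in> carrier_mat m k" and rank: "full_col_rank X" and t: "0 \<le> t" "t \<le> 1"
    and v: "v \<in> carrier_vec k"
    and ker: "((1 - t) \<cdot>\<^sub>m 1\<^sub>m k + t \<cdot>\<^sub>m (transpose_mat X * X)) *\<^sub>v v = 0\<^sub>v k"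
  shows "v = 0\<^sub>v k"
proof -
  define w where "w = X *\<^sub>v v"
  have w: "w \<in> carrier_vec m"
    using X v by (simp add: w_def)
  have Xt: "transpose_mat X \<in> carrier_mat k m"
    using X by simp
  have Mv: "((1 - t) \<cdot>\<^sub>m 1\<^sub>m k + t \<cdot>\<^sub>m (transpose_mat X * X)) *\<^sub>v v
      = (1 - t) \<cdot>\<^sub>v v + t \<cdot>\<^sub>v (transpose_mat X *\<^sub>v w)"
    using X v by (simp add: add_mult_distrib_mat_vec[of _ k k] smult_mat_mult_vec[of _ k k] w_def)
  have "v \<bullet> ((1 - t) \<cdot>\<^sub>v v + t \<cdot>\<^sub>v (transpose_mat X *\<^sub>v w)) = 0"
    using ker v unfolding Mv[symmetric] by simp
  moreover have "v \<bullet> (transpose_mat X *\<^sub>v w) = w \<bullet> w"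
    using transpose_vec_mult_scalar[OF X v w] comm_scalar_prod[OF v, of "transpose_mat X *\<^sub>v w"] Xt w
    by (simp add: w_def)
  ultimately have sum0: "(1 - t) * (v \<bullet> v) + t * (w \<bullet> w) = 0"
    using v w Xt by (simp add: scalar_prod_add_distrib[of _ k])
  have "v \<bullet> v \<ge> 0" "w \<bullet> w \<ge> 0"
    using conjugate_square_ge_0_vec[of v] conjugate_square_ge_0_vec[of w] by simp_all
  then have "(1 - t) * (v \<bullet> v) = 0" "t * (w \<bullet> w) = 0"
    using sum0 t by (smt (verit) mult_nonneg_nonneg)+
  then consider "v \<bullet> v = 0" | "w \<bullet> w = 0"
    using t by force
  then show ?thesis
  proof cases
    case 1
    then show ?thesis
      using conjugate_square_eq_0_vec[OF v] by simp
  next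
    case 2
    then have "X *\<^sub>v v = 0\<^sub>v m"
      using conjugate_square_eq_0_vec[OF w] by (simp add: w_def)
    then show ?thesis
      using rank X v unfolding full_col_rank_def by auto
  qed
qed

text \<open>Along the segment from the identity to the Gram matrix the determinant never vanishes,
  so by continuity it keeps the sign of det 1 = 1.\<close>
lemma det_gram_pos:
  fixes X :: "real mat"
  assumes X: "X \<in> carrier_mat m k" and rank: "full_col_rank X"
  shows "det (transpose_mat X * X) > 0"
proof -
  define G where "G = transpose_mat X * X"
  define M where "M t = (1 - t) \<cdot>\<^sub>m 1\<^sub>m k + t \<cdot>\<^sub>m G" for t :: real
  have G: "G \<in> carrier_mat k k"
    using X by (simp add: G_def)
  then have M: "M t \<in> carrier_mat k k" for t
    by (simp add: M_def)
  have "isCont (\<lambda>t. det (M t)) t" for t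
  proof (rule DERIV_isCont, rule has_real_derivative_det[OF M])
    fix i j
    assume ij: "i < k" "j < k"
    then have "(\<lambda>t. M t $$ (i, j)) = (\<lambda>t. (1 - t) * 1\<^sub>m k $$ (i, j) + t * G $$ (i, j))"
      using G by (simp add: M_def)
    then show "((\<lambda>t. M t $$ (i, j)) has_real_derivative G $$ (i, j) - 1\<^sub>m k $$ (i, j)) (at t)"
      by (auto intro!: derivative_eq_intros)
  qed
  moreover have "det (M t) \<noteq> 0" if "0 \<le> t" "t \<le> 1" for t
    using det_0_iff_vec_prod_zero[OF M] gram_homotopy_kernel_trivial[OF X rank that]
    by (auto simp: M_def G_def)
  moreover have "M 0 = 1\<^sub>m k" "M 1 = G"
    using G by (auto simp: M_def)
  ultimately show ?thesis
    using IVT2[of "\<lambda>t. det (M t)" 1 0 0] unfolding G_def by force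
qed

lemma mat_inv_gram:
  fixes X :: "real mat"
  assumes X: "X \<in> carrier_mat m k" and rank: "full_col_rank X"
  shows "mat_inv (transpose_mat X * X) \<in> carrier_mat k k"
    "transpose_mat X * X * mat_inv (transpose_mat X * X) = 1\<^sub>m k"
  using mat_inv[of "transpose_mat X * X" k] det_gram_pos[OF X rank] X by auto

lemma pinv_full_col_rank:
  fixes X :: "real mat"
  assumes X: "X \<in> carrier_mat m k" and rank: "full_col_rank X"
  shows "pinv X = mat_inv (transpose_mat X * X) * transpose_mat X"
proof -
  define G where "G = transpose_mat X * X"
  define H where "H = mat_inv G"
  have Xt: "transpose_mat X \<in> carrier_mat k m"
    using X by simp
  have G: "G \<in> carrier_mat k k" and detG: "det G \<noteq> 0"
    using X det_gram_pos[OF X rank] by (simp_all add: G_def)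
  note inv = mat_inv[OF G detG, folded H_def]
  have Gsym: "transpose_mat G = G"
    using transpose_mult[OF Xt X] by (simp add: G_def)
  have Hsym: "transpose_mat H = H"
    using transpose_mat_inv_sym[OF G detG Gsym] by (simp add: H_def)
  have HXtX: "H * transpose_mat X * X = 1\<^sub>m k"
    using inv(3) inv(1) Xt X by (simp add: G_def)
  have XHXt: "X * (H * transpose_mat X) = X * H * transpose_mat X"
    using assoc_mult_mat[OF X inv(1) Xt] by simp
  have "X * H * transpose_mat X * X = X * (H * transpose_mat X * X)"
    using X inv(1) Xt by (simp add: assoc_mult_mat[of _ m k _ k _ m] assoc_mult_mat[of _ m k _ m _ k])
  then have penrose1: "X * (H * transpose_mat X) * X = X"
    using HXtX X XHXt by simp
  have penrose3: "transpose_mat (X * (H * transpose_mat X)) = X * (H * transpose_mat X)"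
    using transpose_mult[OF X, of "H * transpose_mat X" m] transpose_mult[OF inv(1) Xt] inv(1) Xt Hsym XHXt
    by simp
  show ?thesis
    unfolding pinv_def G_def[symmetric] H_def[symmetric]
  proof (rule the_equality)
    show "H * transpose_mat X \<in> carrier_mat (dim_col X) (dim_row X) \<and>
      X * (H * transpose_mat X) * X = X \<and>
      H * transpose_mat X * X * (H * transpose_mat X) = H * transpose_mat X \<and>
      transpose_mat (X * (H * transpose_mat X)) = X * (H * transpose_mat X) \<and>
      transpose_mat (H * transpose_mat X * X) = H * transpose_mat X * X"
      using X Xt inv(1) HXtX penrose1 penrose3 by simp
    fix B
    assume "B \<in> carrier_mat (dim_col X) (dim_row X) \<and> X * B * X = X \<and> B * X * B = B \<and>
      transpose_mat (X * B) = X * B \<and> transpose_mat (B * X) = B * X"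
    then have B: "B \<in> carrier_mat k m" and XBX: "X * B * X = X"
      and XB: "transpose_mat (X * B) = X * B"
      using X by auto
    have "H * (transpose_mat X * (X * B)) = (H * G) * B"
      using assoc_mult_mat[OF Xt X B] assoc_mult_mat[OF inv(1) G B] by (simp add: G_def)
    then have "B = H * (transpose_mat X * (X * B))"
      using inv(3) B by simp
    also have "transpose_mat X * (X * B) = transpose_mat (X * B * X)"
      using transpose_mult[OF X B] transpose_mult[of "X * B" m m X k] X B XB by simp
    finally show "B = H * transpose_mat X"
      using XBX by simp
  qed
qed

lemma gram_mat_entry:
  assumes "X \<in> carrier_mat m k" "i < k" "j < k"
  shows "(transpose_mat X * X) $$ (i, j) = (\<Sum>b<m. X $$ (b, i) * X $$ (b, j))"
  using assms by (simp add: scalar_prod_def atLeast0LessThan)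

lemma has_real_derivative_ln_det_gram:
  fixes A :: "real mat"
  assumes A: "A \<in> carrier_mat m k" and rank: "full_col_rank A" and a: "a < m" and r: "r < k"
  defines "A' s \<equiv> mat m k (\<lambda>(b, c). if (b, c) = (a, r) then s else A $$ (b, c))"
  shows "((\<lambda>s. ln (det (transpose_mat (A' s) * A' s))) has_real_derivative
           2 * (A * mat_inv (transpose_mat A * A)) $$ (a, r)) (at (A $$ (a, r)))"
proof -
  define H where "H = mat_inv (transpose_mat A * A)"
  define D where "D i j = (if i = r then A $$ (a, j) else 0) + (if j = r then A $$ (a, i) else 0)"
    for i j
  have A': "A' s \<in> carrier_mat m k" for s
    by (simp add: A'_def)
  have A'_A: "A' (A $$ (a, r)) = A"
    using A by (auto simp: A'_def)
  have G: "transpose_mat A * A \<in> carrier_mat k k" and detG: "det (transpose_mat A * A) > 0"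
    using A det_gram_pos[OF A rank] by simp_all
  have H: "H \<in> carrier_mat k k"
    using mat_inv(1)[OF G] detG by (simp add: H_def)
  have "transpose_mat (transpose_mat A * A) = transpose_mat A * A"
    using transpose_mult[of "transpose_mat A" k m A k] A by simp
  then have HT: "transpose_mat H = H"
    using transpose_mat_inv_sym[OF G] detG by (simp add: H_def)
  have Hsym: "H $$ (r, i) = H $$ (i, r)" if "i < k" for i
  proof -
    have "transpose_mat H $$ (i, r) = H $$ (r, i)"
      using H r that by simp
    then show ?thesis
      using HT by simp
  qed
  have dA': "((\<lambda>s. A' s $$ (b, c)) has_real_derivative (if (b, c) = (a, r) then 1 else 0)) (at x)"
    if "b < m" "c < k" for b c x
    using that by (cases "(b, c) = (a, r)") (auto simp: A'_def intro!: derivative_eq_intros)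
  have dgram: "((\<lambda>s. (transpose_mat (A' s) * A' s) $$ (i, j)) has_real_derivative D i j) (at (A $$ (a, r)))"
    if ij: "i < k" "j < k" for i j
  proof -
    have "((\<lambda>s. \<Sum>b<m. A' s $$ (b, i) * A' s $$ (b, j)) has_real_derivative
        (\<Sum>b<m. (if (b, i) = (a, r) then 1 else 0) * A $$ (b, j) + A $$ (b, i) * (if (b, j) = (a, r) then 1 else 0)))
        (at (A $$ (a, r)))"
      using ij A'_A by (intro DERIV_sum) (auto intro!: derivative_eq_intros dA')
    also have "(\<Sum>b<m. (if (b, i) = (a, r) then 1 else 0) * A $$ (b, j) + A $$ (b, i) * (if (b, j) = (a, r) then 1 else 0)) = D i j"
    proof -
      have "(if (b, i) = (a, r) then 1 else 0) * A $$ (b, j) + A $$ (b, i) * (if (b, j) = (a, r) then 1 else 0)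
          = (if b = a then D i j else 0)" for b
        by (auto simp: D_def)
      then show ?thesis
        using a by simp
    qed
    finally show ?thesis
      using gram_mat_entry[OF A' ij] by simp
  qed
  have "((\<lambda>s. ln (det (transpose_mat (A' s) * A' s))) has_real_derivative
      (\<Sum>i<k. \<Sum>j<k. D i j * H $$ (j, i))) (at (A $$ (a, r)))"
  proof -
    have "((\<lambda>s. ln (det (transpose_mat (A' s) * A' s))) has_real_derivative
        (\<Sum>i<k. \<Sum>j<k. D i j * mat_inv (transpose_mat (A' (A $$ (a, r))) * A' (A $$ (a, r))) $$ (j, i)))
        (at (A $$ (a, r)))"
      using A'_A detG dgram by (intro has_real_derivative_ln_det) (auto simp: A'_def)
    then show ?thesis
      by (simp add: A'_A H_def)
  qed
  moreover have "(\<Sum>i<k. \<Sum>j<k. D i j * H $$ (j, i)) = 2 * (A * H) $$ (a, r)"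
  proof -
    have "(\<Sum>i<k. \<Sum>j<k. D i j * H $$ (j, i))
        = (\<Sum>j<k. A $$ (a, j) * H $$ (j, r)) + (\<Sum>i<k. A $$ (a, i) * H $$ (r, i))"
    proof -
      have "(\<Sum>j<k. D i j * H $$ (j, i))
          = (if i = r then (\<Sum>j<k. A $$ (a, j) * H $$ (j, r)) else 0) + A $$ (a, i) * H $$ (r, i)" for i
        using r by (simp add: D_def distrib_right sum.distrib if_distrib[of "\<lambda>x. x * _"] cong: if_cong)
      then show ?thesis
        using r by (simp add: sum.distrib)
    qed
    also have "\<dots> = 2 * (A * H) $$ (a, r)"
      using A H a r Hsym by (simp add: scalar_prod_def atLeast0LessThan)
    finally show ?thesis .
  qed
  ultimately show ?thesis
    by (simp add: H_def)
qed

lemma transpose_mult_gram_inverse: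
  fixes X :: "real mat"
  assumes X: "X \<in> carrier_mat m k" and rank: "full_col_rank X"
  shows "transpose_mat X * (X * mat_inv (transpose_mat X * X)) = 1\<^sub>m k"
proof -
  have "transpose_mat X \<in> carrier_mat k m"
    using X by simp
  then show ?thesis
    using assoc_mult_mat[OF _ X mat_inv_gram(1)[OF X rank]] mat_inv_gram(2)[OF X rank] by simp
qed

lemma gram_inverse_mult_transpose:
  fixes X :: "real mat"
  assumes X: "X \<in> carrier_mat m k" and rank: "full_col_rank X"
  shows "X * mat_inv (transpose_mat X * X) * transpose_mat X = X * pinv X"
proof -
  have "transpose_mat X \<in> carrier_mat k m"
    using X by simp
  then show ?thesis
    using assoc_mult_mat[OF X mat_inv_gram(1)[OF X rank]] by (simp add: pinv_full_col_rank[OF X rank])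
qed

subsection \<open>The objective and its critical points\<close>

lemma finite_idx: "finite (idx N I)"
proof (rule finite_subset)
  show "idx N I \<subseteq> (\<lambda>f n. if n < N then f n else 0) ` PiE {..<N} (\<lambda>n. {..<I n})"
  proof
    fix i
    assume i: "i \<in> idx N I"
    then have "i = (\<lambda>n. if n < N then restrict i {..<N} n else 0)"
      by (auto simp: idx_def)
    moreover have "restrict i {..<N} \<in> PiE {..<N} (\<lambda>n. {..<I n})"
      using i by (auto simp: idx_def)
    ultimately show "i \<in> (\<lambda>f n. if n < N then f n else 0) ` PiE {..<N} (\<lambda>n. {..<I n})"
      by blast
  qed
qed (auto intro: finite_PiE)

lemma sum_idx_by_mode:
  assumes "n < N"
  shows "(\<Sum>i\<in>idx N I. f i) = (\<Sum>a<I n. \<Sum>i\<in>{i \<in> idx N I. i n = a}. f i)"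
  using assms by (intro sum.group[symmetric] finite_idx) (auto simp: idx_def)

lemma Xmat_carrier: "Xmat I R X n \<in> carrier_mat (I n) R"
  by (simp add: Xmat_def)

lemma Xmat_index: "a < I n \<Longrightarrow> r < R \<Longrightarrow> Xmat I R X n $$ (a, r) = X n a r"
  by (simp add: Xmat_def)

lemma has_real_derivative_multilinear_term:
  assumes n: "n < N" and r: "r < R"
  shows "((\<lambda>s. \<Sum>r'<R. \<Sum>i\<in>idx N I. T i * (\<Prod>m<N. (X(n := (X n)(a := (X n a)(r := s)))) m (i m) r'))
           has_real_derivative unf_prod N I T X n a r) (at x)"
proof -
  define P where "P i r' = (\<Prod>m\<in>{..<N} - {n}. X m (i m) r')" for i r'
  have "(\<Prod>m<N. (X(n := (X n)(a := (X n a)(r := s)))) m (i m) r')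
      = (if i n = a \<and> r' = r then s else X n (i n) r') * P i r'" for s i r'
  proof -
    have "(\<Prod>m\<in>{..<N} - {n}. (X(n := (X n)(a := (X n a)(r := s)))) m (i m) r') = P i r'"
      unfolding P_def by (rule prod.cong) auto
    then show ?thesis
      using n by (simp add: prod.remove[of "{..<N}" n])
  qed
  then have "((\<lambda>s. \<Sum>r'<R. \<Sum>i\<in>idx N I. T i * (\<Prod>m<N. (X(n := (X n)(a := (X n a)(r := s)))) m (i m) r'))
      has_real_derivative (\<Sum>r'<R. \<Sum>i\<in>idx N I. if i n = a \<and> r' = r then T i * P i r' else 0)) (at x)"
    by (simp only:) (intro DERIV_sum, auto intro!: derivative_eq_intros)
  also have "(\<Sum>r'<R. \<Sum>i\<in>idx N I. if i n = a \<and> r' = r then T i * P i r' else 0)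
      = (\<Sum>r'<R. if r' = r then (\<Sum>i\<in>idx N I. if i n = a then T i * P i r else 0) else 0)"
    by (intro sum.cong refl) auto
  also have "\<dots> = unf_prod N I T X n a r"
    unfolding P_def unf_prod_def using r by (simp add: sum.inter_filter[OF finite_idx])
  finally show ?thesis .
qed

lemma has_real_derivative_Lfun:
  assumes n: "n < N" and a: "a < I n" and r: "r < R" and rank: "full_col_rank (Xmat I R X n)"
  shows "((\<lambda>s. Lfun N I R T (X(n := (X n)(a := (X n a)(r := s))))) has_real_derivative
           unf_prod N I T X n a r
           - (Xmat I R X n * mat_inv (transpose_mat (Xmat I R X n) * Xmat I R X n)) $$ (a, r))
         (at (X n a r))"
proof -
  define X' where "X' s = X(n := (X n)(a := (X n a)(r := s)))" for s
  define U where "U = (Xmat I R X n * mat_inv (transpose_mat (Xmat I R X n) * Xmat I R X n)) $$ (a, r)"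
  have "((\<lambda>s. ln (det (transpose_mat (Xmat I R (X' s) n') * Xmat I R (X' s) n')))
      has_real_derivative (if n' = n then 2 * U else 0)) (at (X n a r))" for n'
  proof (cases "n' = n")
    case True
    have "Xmat I R (X' s) n
        = mat (I n) R (\<lambda>(b, c). if (b, c) = (a, r) then s else Xmat I R X n $$ (b, c))" for s
      by (auto simp: X'_def Xmat_def)
    then show ?thesis
      using has_real_derivative_ln_det_gram[OF Xmat_carrier rank a r] a r True
      by (simp add: Xmat_index U_def)
  next
    case False
    then have "Xmat I R (X' s) n' = Xmat I R X n'" for s
      by (simp add: X'_def Xmat_def)
    then show ?thesis
      using False by simp
  qed
  then have "((\<lambda>s. \<Sum>n'<N. ln (det (transpose_mat (Xmat I R (X' s) n') * Xmat I R (X' s) n')))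
      has_real_derivative (\<Sum>n'<N. if n' = n then 2 * U else 0)) (at (X n a r))"
    by (intro DERIV_sum)
  moreover have "(\<Sum>n'<N. if n' = n then 2 * U else 0) = 2 * U"
    using n by simp
  ultimately have "((\<lambda>s. \<Sum>n'<N. ln (det (transpose_mat (Xmat I R (X' s) n') * Xmat I R (X' s) n')))
      has_real_derivative 2 * U) (at (X n a r))"
    by simp
  from DERIV_diff[OF has_real_derivative_multilinear_term[OF n r] DERIV_cmult[OF this, of "1/2"]]
  show ?thesis
    by (simp add: Lfun_def X'_def U_def)
qed

lemma is_critical_iff:
  assumes rank: "\<forall>n<N. full_col_rank (Xmat I R X n)"
  shows "is_critical N I R T X \<longleftrightarrow>
    (\<forall>n<N. mat (I n) R (\<lambda>(a, r). unf_prod N I T X n a r)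
            = Xmat I R X n * mat_inv (transpose_mat (Xmat I R X n) * Xmat I R X n))"
proof -
  define M where "M n = Xmat I R X n * mat_inv (transpose_mat (Xmat I R X n) * Xmat I R X n)" for n
  have "M n \<in> carrier_mat (I n) R" if "n < N" for n
    unfolding M_def using rank that
    by (intro mult_carrier_mat[OF Xmat_carrier] mat_inv_gram(1)[OF Xmat_carrier]) auto
  then have M: "dim_row (M n) = I n" "dim_col (M n) = R" if "n < N" for n
    using that by auto
  have "((\<lambda>s. Lfun N I R T (X(n := (X n)(a := (X n a)(r := s))))) has_real_derivative 0) (at (X n a r))
      \<longleftrightarrow> unf_prod N I T X n a r = M n $$ (a, r)"
    if "n < N" "a < I n" "r < R" for n a r
    using has_real_derivative_Lfun[where I = I and T = T, OF that] rank that DERIV_unique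
    unfolding M_def by force
  then have "is_critical N I R T X \<longleftrightarrow> (\<forall>n<N. \<forall>a<I n. \<forall>r<R. unf_prod N I T X n a r = M n $$ (a, r))"
    unfolding is_critical_def by simp
  also have "\<dots> \<longleftrightarrow> (\<forall>n<N. mat (I n) R (\<lambda>(a, r). unf_prod N I T X n a r) = M n)"
    using M by (auto simp: mat_eq_iff)
  finally show ?thesis
    unfolding M_def .
qed

lemma Zten_eq_transpose_mult_unfolding:
  assumes p: "p < N" and r: "r < R" and s: "s < R"
  shows "Zten N I T X (\<lambda>m. if m = p then s else if m < N then r else 0)
       = (transpose_mat (Xmat I R X p) * mat (I p) R (\<lambda>(a, r). unf_prod N I T X p a r)) $$ (s, r)"
proof -
  define j where "j m = (if m = p then s else if m < N then r else 0)" for m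
  have "T i * (\<Prod>m<N. X m (i m) (j m)) = X p a s * (T i * (\<Prod>m\<in>{..<N} - {p}. X m (i m) r))"
    if "i p = a" for i a
  proof -
    have "(\<Prod>m\<in>{..<N} - {p}. X m (i m) (j m)) = (\<Prod>m\<in>{..<N} - {p}. X m (i m) r)"
      by (rule prod.cong) (auto simp: j_def)
    then show ?thesis
      using p that by (simp add: prod.remove[of "{..<N}" p] j_def)
  qed
  then have "Zten N I T X j
      = (\<Sum>a<I p. \<Sum>i\<in>{i \<in> idx N I. i p = a}. X p a s * (T i * (\<Prod>m\<in>{..<N} - {p}. X m (i m) r)))"
    unfolding Zten_def sum_idx_by_mode[OF p] by (intro sum.cong refl) auto
  also have "\<dots> = (\<Sum>a<I p. X p a s * unf_prod N I T X p a r)"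
    by (simp add: unf_prod_def sum_distrib_left)
  also have "\<dots> = (transpose_mat (Xmat I R X p) * mat (I p) R (\<lambda>(a, r). unf_prod N I T X p a r)) $$ (s, r)"
    using r s by (simp add: Xmat_def scalar_prod_def atLeast0LessThan)
  finally show ?thesis
    unfolding j_def .
qed

lemma TY_mat_eq_unfolding_mult_transpose:
  assumes n: "n < N"
  shows "mat (I n) (I n) (\<lambda>(a, b). TY N I R T X n a b)
       = mat (I n) R (\<lambda>(a, r). unf_prod N I T X n a r) * transpose_mat (Xmat I R X n)"
proof (rule eq_matI)
  fix a b
  assume "a < dim_row (mat (I n) R (\<lambda>(a, r). unf_prod N I T X n a r) * transpose_mat (Xmat I R X n))"
    and "b < dim_col (mat (I n) R (\<lambda>(a, r). unf_prod N I T X n a r) * transpose_mat (Xmat I R X n))"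
  then have a: "a < I n" and b: "b < I n"
    by (simp_all add: Xmat_def)
  have "T i * Yten N R X (i(n := b)) = (\<Sum>r<R. X n b r * (T i * (\<Prod>m\<in>{..<N} - {n}. X m (i m) r)))" for i
  proof -
    have "(\<Prod>m\<in>{..<N} - {n}. X m ((i(n := b)) m) r) = (\<Prod>m\<in>{..<N} - {n}. X m (i m) r)" for r
      by (rule prod.cong) auto
    then show ?thesis
      using n by (simp add: Yten_def prod.remove[of "{..<N}" n] sum_distrib_left mult_ac)
  qed
  then have "TY N I R T X n a b
      = (\<Sum>i\<in>{i \<in> idx N I. i n = a}. \<Sum>r<R. X n b r * (T i * (\<Prod>m\<in>{..<N} - {n}. X m (i m) r)))"
    unfolding TY_def by simp
  also have "\<dots> = (\<Sum>r<R. X n b r * unf_prod N I T X n a r)"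
    unfolding unf_prod_def sum_distrib_left by (rule sum.swap)
  finally have "TY N I R T X n a b = (\<Sum>r<R. X n b r * unf_prod N I T X n a r)" .
  then show "mat (I n) (I n) (\<lambda>(a, b). TY N I R T X n a b) $$ (a, b)
      = (mat (I n) R (\<lambda>(a, r). unf_prod N I T X n a r) * transpose_mat (Xmat I R X n)) $$ (a, b)"
    using a b by (simp add: Xmat_def scalar_prod_def atLeast0LessThan mult.commute)
qed (simp_all add: Xmat_def)

theorem mainTheorem6:
  fixes N R :: nat and I :: "nat \<Rightarrow> nat"
    and T :: "(nat \<Rightarrow> nat) \<Rightarrow> real"
    and X :: "nat \<Rightarrow> nat \<Rightarrow> nat \<Rightarrow> real"
  assumes N: "1 \<le> N"
    and R: "\<forall>n<N. R \<le> I n"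
    and rank: "\<forall>n<N. full_col_rank (Xmat I R X n)"
  shows "(is_critical N I R T X \<longleftrightarrow>
           (\<forall>n<N. mat (I n) R (\<lambda>(a, r). unf_prod N I T X n a r) =
                   Xmat I R X n * mat_inv (transpose_mat (Xmat I R X n) * Xmat I R X n)))
    \<and> (is_critical N I R T X \<longrightarrow>
         (\<forall>i<N. \<forall>r<R. \<exists>c \<in> carrier_vec R.
             vec (I i) (\<lambda>a. unf_prod N I T X i a r) = Xmat I R X i *\<^sub>v c)
       \<and> (\<forall>p<N. \<forall>r<R. \<forall>s<R.
             Zten N I T X (\<lambda>m. if m = p then s else if m < N then r else 0)
               = (if r = s then 1 else 0))
       \<and> (\<forall>i<N. mat (I i) (I i) (\<lambda>(a, b). TY N I R T X i a b)
               = Xmat I R X i * pinv (Xmat I R X i)))"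
proof -
  let ?M = "\<lambda>n. mat (I n) R (\<lambda>(a, r). unf_prod N I T X n a r)"
  let ?H = "\<lambda>n. mat_inv (transpose_mat (Xmat I R X n) * Xmat I R X n)"
  note crit = is_critical_iff[OF rank]
  show ?thesis
  proof (rule conjI[OF crit], intro conjI allI impI)
    fix i r
    assume "is_critical N I R T X" and i: "i < N" and r: "r < R"
    with crit have M: "?M i = Xmat I R X i * ?H i"
      by blast
    have H: "?H i \<in> carrier_mat R R"
      using mat_inv_gram(1)[OF Xmat_carrier] rank i by blast
    have "vec (I i) (\<lambda>a. unf_prod N I T X i a r) = col (?M i) r"
      using r by auto
    also have "\<dots> = Xmat I R X i *\<^sub>v col (?H i) r"
      using M col_mult2[OF Xmat_carrier H r] by simp
    finally show "\<exists>c \<in> carrier_vec R. vec (I i) (\<lambda>a. unf_prod N I T X i a r) = Xmat I R X i *\<^sub>v c"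
      using col_carrier_vec[OF r H] by blast
  next
    fix p r s
    assume "is_critical N I R T X" and p: "p < N" and r: "r < R" and s: "s < R"
    with crit have "transpose_mat (Xmat I R X p) * ?M p = 1\<^sub>m R"
      using rank transpose_mult_gram_inverse[OF Xmat_carrier] by simp
    then show "Zten N I T X (\<lambda>m. if m = p then s else if m < N then r else 0) = (if r = s then 1 else 0)"
      using Zten_eq_transpose_mult_unfolding[OF p r s] r s by simp
  next
    fix i
    assume "is_critical N I R T X" and i: "i < N"
    with crit have "?M i * transpose_mat (Xmat I R X i) = Xmat I R X i * pinv (Xmat I R X i)"
      using rank gram_inverse_mult_transpose[OF Xmat_carrier] by simp
    then show "mat (I i) (I i) (\<lambda>(a, b). TY N I R T X i a b) = Xmat I R X i * pinv (Xmat I R X i)"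
      using TY_mat_eq_unfolding_mult_transpose[OF i] by simp
  qed
qed

end
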